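(* Consider a played level $h$ (i.e. $p_h=1$) of the algorithm SSE described in the context, and let $X(t_h)\in\{u(t_h),\gamma(t_h)\}$ denote the arm pulled at time step $t_h$. At each time step $t_h\in\{3,\dots,T_h\}$, $$X(t_h)=u(t_h)\implies L_{h,u(t_h)}(t_h-1)\le L_{h,\gamma(t_h)}(t_h-1),$$ $$X(t_h)=\gamma(t_h)\implies U_{h,u(t_h)}(t_h-1)\le U_{h,\gamma(t_h)}(t_h-1),$$ and if $X(t_h)=(h,i)$ then $G_{h,\gamma(t_h)}(t_h)\le 2D_{h,i}(t_h-1)$.
   Context: Algorithm SSE (single played level $h$). A finite set $\mathcal{S}_h$ of arms $(h,i)$ is in contention; pulling an arm yields a real reward. Time $t_h$ counts pulls at this level; $X(s)$ is the arm pulled at time $s$ and $y(s)$ its reward; $N_{h,i}(t)$ = number of pulls of $(h,i)$ among the first $t$; $\hat f_{h,i}(t)$ = empirical mean of its rewards; $\hat\nu^2_{h,i}(t)=\frac{1}{N_{h,i}(t)}\sum_{s\le t}(y(s)-\hat f_{h,i}(s))^2\mathbb{1}\{X(s)=(h,i)\}$. With constants $B,C\ge1$, $\delta\in(0,1)$, a positive integer $N_H$, and $\epsilon_h\ge 0$: $\beta(t,\delta)=\log(15N_Ht^4/(4\delta))$; $D_{h,i}(t)=\sqrt{4B\hat\nu^2_{h,i}(t)\beta(t,\delta)/N_{h,i}(t)}+2\sqrt{2BC}\beta(t,\delta)/(N_{h,i}(t)-1)$; $U_{h,i}(t)=\hat f_{h,i}(t)+D_{h,i}(t)$; $L_{h,i}(t)=\hat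 f_{h,i}(t)-D_{h,i}(t)$; $G_{h,i}(t)=\max_{j\ne i,(h,j)\in\mathcal{S}_h}U_{h,j}(t-1)-L_{h,i}(t-1)$; $\gamma(t)=\arg\min_{(h,i)\in\mathcal{S}_h}G_{h,i}(t)$; $u(t)=\arg\max_{(h,i)\in\mathcal{S}_h,i\ne\gamma(t)}U_{h,i}(t-1)$. The game first pulls every arm of $\mathcal{S}_h$ twice; then, while $G_{h,\gamma(t_h)}(t_h)\ge\epsilon_h$, it pulls $X(t_h)=\arg\max_{i\in\{\gamma(t_h),u(t_h)\}}D_{h,i}(t_h-1)$ and increments $t_h$; $T_h$ is the first time with $G_{h,\gamma(T_h)}(T_h)<\epsilon_h$. *)

theory Defs
  imports Complex_Main
begin

text \<open>Model of algorithm SSE at one played level h. Arms of the level are elements of a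
finite set S of type 'a (the level index h is implicit). Time s = 1,2,... counts pulls
at this level; X s is the arm pulled at time s and y s its reward.\<close>

definition npulls :: "(nat \<Rightarrow> 'a) \<Rightarrow> 'a \<Rightarrow> nat \<Rightarrow> nat" where
  "npulls X i t = card {s \<in> {1..t}. X s = i}"

definition fhat :: "(nat \<Rightarrow> 'a) \<Rightarrow> (nat \<Rightarrow> real) \<Rightarrow> 'a \<Rightarrow> nat \<Rightarrow> real" where
  "fhat X y i t = (\<Sum>s\<in>{s \<in> {1..t}. X s = i}. y s) / real (npulls X i t)"

definition nuhat :: "(nat \<Rightarrow> 'a) \<Rightarrow> (nat \<Rightarrow> real) \<Rightarrow> 'a \<Rightarrow> nat \<Rightarrow> real" where
  "nuhat X y i t =
     (\<Sum>s\<in>{s \<in> {1..t}. X s = i}. (y s - fhat X y i s)^2) / real (npulls X i t)"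

definition beta :: "nat \<Rightarrow> real \<Rightarrow> nat \<Rightarrow> real" where
  "beta NH \<delta> t = ln (15 * real NH * real t ^ 4 / (4 * \<delta>))"

definition Dconf :: "real \<Rightarrow> real \<Rightarrow> real \<Rightarrow> nat \<Rightarrow> (nat \<Rightarrow> 'a) \<Rightarrow> (nat \<Rightarrow> real)
    \<Rightarrow> 'a \<Rightarrow> nat \<Rightarrow> real" where
  "Dconf B C \<delta> NH X y i t =
     sqrt (4 * B * nuhat X y i t * beta NH \<delta> t / real (npulls X i t))
     + 2 * sqrt (2 * B * C) * beta NH \<delta> t / (real (npulls X i t) - 1)"

definition Ucb :: "real \<Rightarrow> real \<Rightarrow> real \<Rightarrow> nat \<Rightarrow> (nat \<Rightarrow> 'a) \<Rightarrow> (nat \<Rightarrow> real)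
    \<Rightarrow> 'a \<Rightarrow> nat \<Rightarrow> real" where
  "Ucb B C \<delta> NH X y i t = fhat X y i t + Dconf B C \<delta> NH X y i t"

definition Lcb :: "real \<Rightarrow> real \<Rightarrow> real \<Rightarrow> nat \<Rightarrow> (nat \<Rightarrow> 'a) \<Rightarrow> (nat \<Rightarrow> real)
    \<Rightarrow> 'a \<Rightarrow> nat \<Rightarrow> real" where
  "Lcb B C \<delta> NH X y i t = fhat X y i t - Dconf B C \<delta> NH X y i t"

definition Gap :: "'a set \<Rightarrow> real \<Rightarrow> real \<Rightarrow> real \<Rightarrow> nat \<Rightarrow> (nat \<Rightarrow> 'a) \<Rightarrow> (nat \<Rightarrow> real)
    \<Rightarrow> 'a \<Rightarrow> nat \<Rightarrow> real" where
  "Gap S B C \<delta> NH X y i t =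
     Max ((\<lambda>j. Ucb B C \<delta> NH X y j (t - 1)) ` (S - {i})) - Lcb B C \<delta> NH X y i (t - 1)"

text \<open>A run of SSE at a played level, up to its stopping time T. The tie-breaking rules of
the argmin/argmax are arbitrary: gam and u are any functions with the argmin/argmax
property.\<close>
definition sse_run :: "'a set \<Rightarrow> real \<Rightarrow> real \<Rightarrow> real \<Rightarrow> nat \<Rightarrow> real \<Rightarrow> (nat \<Rightarrow> 'a)
    \<Rightarrow> (nat \<Rightarrow> real) \<Rightarrow> (nat \<Rightarrow> 'a) \<Rightarrow> (nat \<Rightarrow> 'a) \<Rightarrow> nat \<Rightarrow> bool" where
  "sse_run S B C \<delta> NH \<epsilon> X y gam u T \<longleftrightarrow>
     (let K = card S;
          D = (\<lambda>i t. Dconf B C \<delta> NH X y i t);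
          U = (\<lambda>i t. Ucb B C \<delta> NH X y i t);
          G = (\<lambda>i t. Gap S B C \<delta> NH X y i t)
      in
     \<comment> \<open>initialisation: the first 2K pulls pull every arm exactly twice\<close>
     (\<forall>s \<in> {1..2*K}. X s \<in> S) \<and> (\<forall>i \<in> S. npulls X i (2*K) = 2) \<and>
     \<comment> \<open>gam t is an argmin of G(., t) over S\<close>
     (\<forall>t > 2*K. gam t \<in> S \<and> (\<forall>j \<in> S. G (gam t) t \<le> G j t)) \<and>
     \<comment> \<open>u t is an argmax of U(., t-1) over S minus gam t\<close>
     (\<forall>t > 2*K. u t \<in> S - {gam t} \<and> (\<forall>j \<in> S - {gam t}. U j (t - 1) \<le> U (u t) (t - 1))) \<and>
     \<comment> \<open>stopping time T: the first time after initialisation with G < eps\<close>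
     2*K < T \<and> G (gam T) T < \<epsilon> \<and> (\<forall>t. 2*K < t \<and> t < T \<longrightarrow> \<epsilon> \<le> G (gam t) t) \<and>
     \<comment> \<open>selection rule: X t is an argmax of D(., t-1) over {gam t, u t}\<close>
     (\<forall>t. 2*K < t \<and> t \<le> T \<longrightarrow>
        X t \<in> {gam t, u t} \<and> D (gam t) (t - 1) \<le> D (X t) (t - 1)
                           \<and> D (u t) (t - 1) \<le> D (X t) (t - 1)))"

end

theory Submission
  imports Defs
begin

text \<open>The lemma only uses that each arm carries an interval [L_i, U_i] of width 2 D_i. Since u maximises U off \<gamma>, the gap of \<gamma> is
U_u - L_\<gamma>, whereas the gap of u is at most max U_\<gamma> U_u - L_u. Minimality of the gap of
\<gamma> therefore gives L_u \<le> L_\<gamma> when U_\<gamma> \<le> U_u, and L_u - L_\<gamma> \<le> D_\<gamma> - D_u otherwise.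
Since the pulled arm is the one with the larger width, both cases yield the two
comparisons, and each of these bounds the gap of \<gamma> by the width of the pulled arm.\<close>

definition index_gap :: "'a set \<Rightarrow> ('a \<Rightarrow> real) \<Rightarrow> ('a \<Rightarrow> real) \<Rightarrow> 'a \<Rightarrow> real" where
  "index_gap S U L i = Max (U ` (S - {i})) - L i"

lemma Gap_eq_index_gap:
  "Gap S B C \<delta> NH X y i t =
     index_gap S (\<lambda>j. Ucb B C \<delta> NH X y j (t - 1)) (\<lambda>j. Lcb B C \<delta> NH X y j (t - 1)) i"
  unfolding Gap_def index_gap_def ..

lemma index_gap_argmax:
  assumes "finite S" and "v \<in> S - {g}" and "\<forall>j \<in> S - {g}. U j \<le> U v"
  shows "index_gap S U L g = U v - L g"
proof -
  have "Max (U ` (S - {g})) = U v"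
    using assms by (intro Max_eqI) auto
  then show ?thesis unfolding index_gap_def by simp
qed

lemma index_gap_le_max:
  assumes "finite S" and "g \<in> S" and "v \<in> S - {g}" and "\<forall>j \<in> S - {g}. U j \<le> U v"
  shows "index_gap S U L v \<le> max (U g) (U v) - L v"
proof -
  have "U j \<le> max (U g) (U v)" if "j \<in> S - {v}" for j
    using that assms(4) by (cases "j = g") (auto simp: le_max_iff_disj)
  moreover have "U ` (S - {v}) \<noteq> {}"
    using assms(2,3) by auto
  ultimately have "Max (U ` (S - {v})) \<le> max (U g) (U v)"
    using assms(1) by (simp add: Max_le_iff)
  then show ?thesis unfolding index_gap_def by simp
qed

lemma index_gap_argmin_pulled_arm:
  fixes U L D :: "'a \<Rightarrow> real"
  assumes "finite S" and "g \<in> S" and "v \<in> S - {g}"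
    and v_max: "\<forall>j \<in> S - {g}. U j \<le> U v"
    and g_min: "index_gap S U L g \<le> index_gap S U L v"
    and width: "\<And>j. U j = L j + 2 * D j"
    and "x \<in> {g, v}" and "D g \<le> D x" and "D v \<le> D x"
  shows "(x = v \<longrightarrow> L v \<le> L g) \<and> (x = g \<longrightarrow> U v \<le> U g) \<and> index_gap S U L g \<le> 2 * D x"
proof -
  have gap_g: "index_gap S U L g = U v - L g"
    using assms(1,3) v_max by (rule index_gap_argmax)
  have "U v - L g \<le> max (U g) (U v) - L v"
    using g_min index_gap_le_max[OF assms(1-3) v_max, of L] gap_g by simp
  then have lower: "U g \<le> U v \<Longrightarrow> L v \<le> L g"
    and crossed: "U v < U g \<Longrightarrow> L v - L g \<le> D g - D v"
    using width[of g] width[of v] by (auto simp: max_def)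
  have pull_u: "L v \<le> L g" if "x = v"
    using lower crossed \<open>D g \<le> D x\<close> that by force
  have pull_gam: "U v \<le> U g" if "x = g"
    using lower \<open>D v \<le> D x\<close> that width[of g] width[of v] by force
  have "U v - L g \<le> 2 * D x"
    using \<open>x \<in> {g, v}\<close> pull_u pull_gam width[of g] width[of v] by auto
  with pull_u pull_gam gap_g show ?thesis by simp
qed

theorem lemma3:
  fixes S :: "'a set" and B C \<delta> \<epsilon> :: real and NH :: nat
    and X :: "nat \<Rightarrow> 'a" and y :: "nat \<Rightarrow> real" and gam u :: "nat \<Rightarrow> 'a" and T :: nat
  assumes "finite S" and "card S \<ge> 2"
    and "B \<ge> 1" and "C \<ge> 1" and "0 < \<delta>" and "\<delta> < 1" and "NH > 0" and "\<epsilon> \<ge> 0"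
    and "sse_run S B C \<delta> NH \<epsilon> X y gam u T"
  shows "\<forall>t. 2 * card S < t \<and> t \<le> T \<longrightarrow>
     (X t = u t \<longrightarrow> Lcb B C \<delta> NH X y (u t) (t - 1) \<le> Lcb B C \<delta> NH X y (gam t) (t - 1)) \<and>
     (X t = gam t \<longrightarrow> Ucb B C \<delta> NH X y (u t) (t - 1) \<le> Ucb B C \<delta> NH X y (gam t) (t - 1)) \<and>
     Gap S B C \<delta> NH X y (gam t) t \<le> 2 * Dconf B C \<delta> NH X y (X t) (t - 1)"
proof (intro allI impI)
  fix t assume t: "2 * card S < t \<and> t \<le> T"
  let ?U = "\<lambda>j. Ucb B C \<delta> NH X y j (t - 1)"
  let ?L = "\<lambda>j. Lcb B C \<delta> NH X y j (t - 1)"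
  let ?D = "\<lambda>j. Dconf B C \<delta> NH X y j (t - 1)"
  have "gam t \<in> S" and g_min: "\<forall>j \<in> S. index_gap S ?U ?L (gam t) \<le> index_gap S ?U ?L j"
    and "u t \<in> S - {gam t}" and "\<forall>j \<in> S - {gam t}. ?U j \<le> ?U (u t)"
    and "X t \<in> {gam t, u t}" and "?D (gam t) \<le> ?D (X t)" and "?D (u t) \<le> ?D (X t)"
    using \<open>sse_run S B C \<delta> NH \<epsilon> X y gam u T\<close> t
    unfolding sse_run_def Let_def Gap_eq_index_gap by auto
  moreover have "\<And>j. ?U j = ?L j + 2 * ?D j"
    by (simp add: Ucb_def Lcb_def)
  ultimately show "(X t = u t \<longrightarrow> ?L (u t) \<le> ?L (gam t)) \<and> (X t = gam t \<longrightarrow> ?U (u t) \<le> ?U (gam t)) \<and>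
      Gap S B C \<delta> NH X y (gam t) t \<le> 2 * ?D (X t)"
    unfolding Gap_eq_index_gap
    by (intro index_gap_argmin_pulled_arm[OF \<open>finite S\<close>]) auto
qed

end
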